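(* Let $A$ be a meet-complemented lattice in which $\Box x$ and $\Diamond x$ exist for every $x\in A$. Then the following are equivalent: (i) $\Diamond\Box a\le\Box a$ for all $a\in A$; (ii) $\Diamond a\le\Box\Diamond a$ for all $a\in A$.
   Context: A meet-complemented lattice is a lattice $(L,\le)$ (not necessarily distributive) such that for every $a\in L$ the element $\neg a=\max\{b\in L: a\wedge b\le c\ \text{for all } c\in L\}$ exists; it is bounded with bottom $0$ and top $1$. For $a\in L$, $\Box a=\max\{b\in L: a\vee\neg b=1\}$ and $\Diamond a=\min\{b\in L: \neg a\vee b=1\}$. *)

theory Defs
  imports Main
begin

definition is_max_of :: "('a::order \<Rightarrow> bool) \<Rightarrow> 'a \<Rightarrow> bool" where
  "is_max_of P x \<longleftrightarrow> P x \<and> (\<forall>y. P y \<longrightarrow> y \<le> x)"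

definition is_min_of :: "('a::order \<Rightarrow> bool) \<Rightarrow> 'a \<Rightarrow> bool" where
  "is_min_of P x \<longleftrightarrow> P x \<and> (\<forall>y. P y \<longrightarrow> x \<le> y)"

definition meet_complemented :: "'a::bounded_lattice itself \<Rightarrow> bool" where
  "meet_complemented _ \<longleftrightarrow> (\<forall>a::'a. \<exists>b. is_max_of (\<lambda>b. \<forall>c. inf a b \<le> c) b)"

definition mneg :: "'a::bounded_lattice \<Rightarrow> 'a" where
  "mneg a = (GREATEST b. \<forall>c. inf a b \<le> c)"

definition mbox :: "'a::bounded_lattice \<Rightarrow> 'a" where
  "mbox a = (GREATEST b. sup a (mneg b) = top)"

definition mdia :: "'a::bounded_lattice \<Rightarrow> 'a" where
  "mdia a = (LEAST b. sup (mneg a) b = top)"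

definition box_exists :: "'a::bounded_lattice \<Rightarrow> bool" where
  "box_exists a \<longleftrightarrow> (\<exists>b. is_max_of (\<lambda>b. sup a (mneg b) = top) b)"

definition dia_exists :: "'a::bounded_lattice \<Rightarrow> bool" where
  "dia_exists a \<longleftrightarrow> (\<exists>b. is_min_of (\<lambda>b. sup (mneg a) b = top) b)"

end

theory Submission
  imports Defs
begin

text \<open>Under the hypotheses, \<open>\<Diamond>\<close> is left adjoint to \<open>\<Box>\<close>: \<open>\<Diamond>b \<le> a \<longleftrightarrow> b \<le> \<Box>a\<close>,
  since both sides say \<open>\<not>b \<squnion> a = 1\<close> (using that \<open>\<not>\<close> is antitone).
  For any adjunction \<open>f \<stileturn> g\<close> on a partial order, \<open>f (g a) \<le> g a\<close> for all \<open>a\<close> and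
  \<open>f a \<le> g (f a)\<close> for all \<open>a\<close> are equivalent: each is obtained from the other
  by composing with the unit \<open>a \<le> g (f a)\<close> or the counit \<open>f (g a) \<le> a\<close>.\<close>

lemma is_max_of_Greatest: "is_max_of P m \<Longrightarrow> Greatest P = m"
  unfolding is_max_of_def by (auto intro: Greatest_equality)

lemma is_min_of_Least: "is_min_of P m \<Longrightarrow> Least P = m"
  unfolding is_min_of_def by (auto intro: Least_equality)

lemma le_mneg_iff:
  fixes a b :: "'a::bounded_lattice"
  assumes "meet_complemented TYPE('a)"
  shows "b \<le> mneg a \<longleftrightarrow> inf a b = bot"
proof -
  from assms obtain m where m: "is_max_of (\<lambda>b. \<forall>c. inf a b \<le> c) m"
    unfolding meet_complemented_def by blast
  have m_eq: "mneg a = m"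
    unfolding mneg_def using m by (rule is_max_of_Greatest)
  have "inf a m = bot"
    using m bot_unique unfolding is_max_of_def by blast
  show ?thesis
  proof
    assume "b \<le> mneg a"
    then have "inf a b \<le> inf a m"
      using m_eq by (simp add: le_infI2)
    with \<open>inf a m = bot\<close> show "inf a b = bot"
      by (simp add: bot_unique)
  next
    assume "inf a b = bot"
    then have "\<forall>c. inf a b \<le> c"
      by simp
    then show "b \<le> mneg a"
      using m m_eq unfolding is_max_of_def by simp
  qed
qed

lemma mneg_antimono:
  fixes b b' :: "'a::bounded_lattice"
  assumes "meet_complemented TYPE('a)" and "b \<le> b'"
  shows "mneg b' \<le> mneg b"
proof -
  have "inf b (mneg b') \<le> inf b' (mneg b')"
    using assms(2) by (rule inf_mono) simp
  also have "\<dots> = bot"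
    using le_mneg_iff[OF assms(1), of "mneg b'" b'] by simp
  finally show ?thesis
    using le_mneg_iff[OF assms(1), of "mneg b'" b] by (simp add: bot_unique)
qed

lemma le_mbox_iff:
  fixes a b :: "'a::bounded_lattice"
  assumes "meet_complemented TYPE('a)" and "box_exists a"
  shows "b \<le> mbox a \<longleftrightarrow> sup a (mneg b) = top"
proof -
  from assms(2) obtain m where m: "is_max_of (\<lambda>b. sup a (mneg b) = top) m"
    unfolding box_exists_def by blast
  have m_eq: "mbox a = m"
    unfolding mbox_def using m by (rule is_max_of_Greatest)
  show ?thesis
  proof
    assume "b \<le> mbox a"
    then have "sup a (mneg m) \<le> sup a (mneg b)"
      using mneg_antimono[OF assms(1)] m_eq by (simp add: le_supI2)
    then show "sup a (mneg b) = top"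
      using m top_unique unfolding is_max_of_def by auto
  qed (use m m_eq in \<open>simp add: is_max_of_def\<close>)
qed

lemma mdia_le_iff:
  fixes a b :: "'a::bounded_lattice"
  assumes "dia_exists a"
  shows "mdia a \<le> b \<longleftrightarrow> sup (mneg a) b = top"
proof -
  from assms obtain m where m: "is_min_of (\<lambda>b. sup (mneg a) b = top) m"
    unfolding dia_exists_def by blast
  have m_eq: "mdia a = m"
    unfolding mdia_def using m by (rule is_min_of_Least)
  show ?thesis
  proof
    assume "mdia a \<le> b"
    then have "sup (mneg a) m \<le> sup (mneg a) b"
      using m_eq by (simp add: le_supI2)
    then show "sup (mneg a) b = top"
      using m top_unique unfolding is_min_of_def by auto
  qed (use m m_eq in \<open>simp add: is_min_of_def\<close>)
qed

lemma mdia_le_iff_le_mbox: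
  fixes a b :: "'a::bounded_lattice"
  assumes "meet_complemented TYPE('a)" and "box_exists a" and "dia_exists b"
  shows "mdia b \<le> a \<longleftrightarrow> b \<le> mbox a"
  using mdia_le_iff[OF assms(3)] le_mbox_iff[OF assms(1,2)] by (simp add: sup_commute)

lemma adjunction_closure_iff:
  fixes f g :: "'a::order \<Rightarrow> 'a"
  assumes adj: "\<And>a b. f b \<le> a \<longleftrightarrow> b \<le> g a"
  shows "(\<forall>a. f (g a) \<le> g a) \<longleftrightarrow> (\<forall>a. f a \<le> g (f a))"
proof -
  have unit: "a \<le> g (f a)" for a
    using adj by blast
  have counit: "f (g a) \<le> a" for a
    using adj by blast
  have f_mono: "x \<le> y \<Longrightarrow> f x \<le> f y" for x y
    using adj unit order_trans by metis
  have g_mono: "x \<le> y \<Longrightarrow> g x \<le> g y" for x y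
    using adj counit order_trans by metis
  show ?thesis
  proof (intro iffI allI)
    fix a
    assume "\<forall>a. f (g a) \<le> g a"
    then show "f a \<le> g (f a)"
      using f_mono[OF unit[of a]] order_trans by blast
  next
    fix a
    assume "\<forall>a. f a \<le> g (f a)"
    then show "f (g a) \<le> g a"
      using g_mono[OF counit[of a]] order_trans by blast
  qed
qed

theorem proposition19:
  assumes "meet_complemented TYPE('a::bounded_lattice)"
    and "\<forall>x::'a. box_exists x"
    and "\<forall>x::'a. dia_exists x"
  shows "(\<forall>a::'a. mdia (mbox a) \<le> mbox a) \<longleftrightarrow> (\<forall>a::'a. mdia a \<le> mbox (mdia a))"
  using assms by (intro adjunction_closure_iff mdia_le_iff_le_mbox) auto

end
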